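(* Let $\alpha \in \mathbb{R}_{>0}$ and $M_\alpha = \{f(\alpha) \mid f(x) \in \mathbb{N}_0[x,x^{-1}]\}$ as an additive monoid. Then $M_\alpha$ is an LFM if and only if it is a UFM.
   Context: $\mathbb{N}_0[x,x^{-1}]$ denotes the semiring of Laurent polynomials with coefficients in $\mathbb{N}_0$. For an atomic reduced additive monoid $M$ and nonzero $a \in M$, $\mathsf{Z}(a)$ is the set of factorizations of $a$ (formal sums of atoms, up to order, adding to $a$), and $|z|$ is the length of $z$ (number of atoms with repetition). $M$ is an LFM (length-factorial monoid) if it is atomic and for all $a \in M$ and $z,z' \in \mathsf{Z}(a)$, $|z| = |z'|$ implies $z = z'$; it is a UFM if it is atomic and $|\mathsf{Z}(a)| = 1$ for all nonzero $a$. *)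

theory Defs
  imports Complex_Main "HOL-Library.Multiset"
begin

definition M_alpha :: "real \<Rightarrow> real set" where
  "M_alpha \<alpha> = {(\<Sum>k\<in>S. of_nat (c k) * \<alpha> powi k) | (S :: int set) (c :: int \<Rightarrow> nat). finite S}"

definition atoms :: "'a::comm_monoid_add set \<Rightarrow> 'a set" where
  "atoms M = {a \<in> M. a \<noteq> 0 \<and> (\<forall>b\<in>M. \<forall>c\<in>M. a = b + c \<longrightarrow> b = 0 \<or> c = 0)}"

definition factorizations :: "'a::comm_monoid_add set \<Rightarrow> 'a \<Rightarrow> 'a multiset set" where
  "factorizations M a = {z. set_mset z \<subseteq> atoms M \<and> sum_mset z = a}"

definition atomic_monoid :: "'a::comm_monoid_add set \<Rightarrow> bool" where
  "atomic_monoid M \<longleftrightarrow> (\<forall>a\<in>M. a \<noteq> 0 \<longrightarrow> factorizations M a \<noteq> {})"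

definition LFM :: "'a::comm_monoid_add set \<Rightarrow> bool" where
  "LFM M \<longleftrightarrow> atomic_monoid M \<and>
     (\<forall>a\<in>M. \<forall>z\<in>factorizations M a. \<forall>z'\<in>factorizations M a. size z = size z' \<longrightarrow> z = z')"

definition UFM :: "'a::comm_monoid_add set \<Rightarrow> bool" where
  "UFM M \<longleftrightarrow> atomic_monoid M \<and> (\<forall>a\<in>M. a \<noteq> 0 \<longrightarrow> card (factorizations M a) = 1)"

end

theory Submission
  imports Defs
begin

text \<open>For \<open>\<alpha> = 1\<close> the monoid is \<open>\<nat>\<close>, which is factorial. Otherwise multiplication by \<open>\<alpha>\<close>
  is an automorphism of \<open>M\<^sub>\<alpha>\<close>, so it maps atoms to atoms. If \<open>z\<close> and \<open>z'\<close> factor the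
  same element \<open>a\<close>, then \<open>z + \<alpha>z'\<close> and \<open>z' + \<alpha>z\<close> are factorizations of \<open>(1 + \<alpha>) a\<close> of the
  same length; length-factoriality makes them equal, and comparing multiplicities shows that
  the set of atoms whose multiplicities in \<open>z\<close> and \<open>z'\<close> differ is a finite set of positive reals invariant
  under multiplication by \<open>\<alpha> \<noteq> 1\<close>, hence empty.\<close>

lemma sum_mset_nonneg_eq_0_iff:
  fixes z :: "'a::ordered_comm_monoid_add multiset"
  assumes "\<forall>x\<in>#z. 0 \<le> x"
  shows "sum_mset z = 0 \<longleftrightarrow> (\<forall>x\<in>#z. x = 0)"
  using assms
proof (induction z)
  case (add x z)
  have "0 \<le> sum_mset z"
    using add.prems by (induction z) auto
  then show ?case
    using add by (simp add: add_nonneg_eq_0_iff)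
qed simp

lemma atoms_subset: "atoms M \<subseteq> M"
  unfolding atoms_def by blast

lemma atoms_pos:
  fixes M :: "'a::ordered_comm_monoid_add set"
  assumes "M \<subseteq> {0..}" "a \<in> atoms M"
  shows "0 < a"
  using assms unfolding atoms_def by (auto simp: order_less_le)

lemma factorizations_zero:
  fixes M :: "'a::ordered_comm_monoid_add set"
  assumes "M \<subseteq> {0..}"
  shows "factorizations M 0 = {{#}}"
proof -
  have "z = {#}" if "z \<in> factorizations M 0" for z
  proof -
    have "\<forall>x\<in>#z. 0 < x"
      using that atoms_pos[OF assms] unfolding factorizations_def by blast
    moreover have "sum_mset z = 0"
      using that unfolding factorizations_def by blast
    ultimately show ?thesis
      using sum_mset_nonneg_eq_0_iff[of z] by (auto simp: order_less_le)
  qed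
  then show ?thesis
    unfolding factorizations_def by auto
qed

lemma factorizations_add:
  "z \<in> factorizations M a \<Longrightarrow> w \<in> factorizations M b \<Longrightarrow> z + w \<in> factorizations M (a + b)"
  unfolding factorizations_def by auto

lemma UFM_iff_factorizations_unique:
  "UFM M \<longleftrightarrow> atomic_monoid M \<and>
     (\<forall>a\<in>M. a \<noteq> 0 \<longrightarrow> (\<forall>z\<in>factorizations M a. \<forall>z'\<in>factorizations M a. z = z'))"
proof -
  have card_eq_1: "card A = 1 \<longleftrightarrow> A \<noteq> {} \<and> (\<forall>x\<in>A. \<forall>y\<in>A. x = y)" for A :: "'b set"
    unfolding One_nat_def card_1_singleton_iff by blast
  show ?thesis
    unfolding UFM_def atomic_monoid_def card_eq_1 by blast
qed

lemma UFM_imp_LFM: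
  fixes M :: "'a::ordered_comm_monoid_add set"
  assumes "M \<subseteq> {0..}" "UFM M"
  shows "LFM M"
  using assms factorizations_zero[OF assms(1)]
  unfolding LFM_def UFM_iff_factorizations_unique by (metis singletonD)

lemma atoms_mult_closed:
  fixes M :: "'a::field set"
  assumes "c \<noteq> 0" and mult: "\<And>x. x \<in> M \<Longrightarrow> c * x \<in> M" and div: "\<And>x. x \<in> M \<Longrightarrow> x / c \<in> M"
    and a: "a \<in> atoms M"
  shows "c * a \<in> atoms M"
proof -
  have "b = 0 \<or> d = 0" if "b \<in> M" "d \<in> M" "c * a = b + d" for b d
  proof -
    have "a = b / c + d / c"
      using \<open>c * a = b + d\<close> \<open>c \<noteq> 0\<close> by (simp add: field_simps)
    then have "b / c = 0 \<or> d / c = 0"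
      using a div that(1,2) unfolding atoms_def by blast
    then show ?thesis
      using \<open>c \<noteq> 0\<close> by simp
  qed
  then show ?thesis
    using a mult \<open>c \<noteq> 0\<close> unfolding atoms_def by auto
qed

lemma count_image_mset_inj:
  assumes "inj f"
  shows "count (image_mset f A) (f x) = count A x"
proof -
  have "f -` {f x} = {x}"
    using assms by (auto dest: injD)
  then show ?thesis
    by (cases "x \<in># A") (auto simp: count_image_mset not_in_iff)
qed

lemma finite_mult_invariant_pos_set_empty:
  fixes D :: "'a::linordered_field set"
  assumes "finite D" "D \<subseteq> {0<..}" "\<alpha> \<noteq> 1" and invariant: "\<And>x. \<alpha> * x \<in> D \<longleftrightarrow> x \<in> D"
  shows "D = {}"
proof (rule ccontr)
  assume "D \<noteq> {}"
  define x where "x = Max D"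
  have x: "x \<in> D" "\<And>y. y \<in> D \<Longrightarrow> y \<le> x"
    using \<open>finite D\<close> \<open>D \<noteq> {}\<close> unfolding x_def by auto
  have "0 < x" "0 < \<alpha> * x"
    using x(1) invariant[of x] assms(2) by auto
  then have "0 < \<alpha>"
    by (simp add: zero_less_mult_iff)
  have "\<alpha> * x \<le> x"
    using x invariant by blast
  moreover have "x / \<alpha> \<le> x"
    using x invariant[of "x / \<alpha>"] \<open>0 < \<alpha>\<close> by simp
  ultimately have "\<alpha> \<le> 1" "1 \<le> \<alpha>"
    using \<open>0 < x\<close> \<open>0 < \<alpha>\<close> by (simp_all add: field_simps)
  then show False
    using \<open>\<alpha> \<noteq> 1\<close> by simp
qed

lemma add_image_mset_mult_swap_imp_eq:
  fixes z z' :: "'a::linordered_field multiset"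
  assumes "0 < \<alpha>" "\<alpha> \<noteq> 1" "\<forall>x\<in>#z. 0 < x" "\<forall>x\<in>#z'. 0 < x"
    and swap: "z + image_mset ((*) \<alpha>) z' = z' + image_mset ((*) \<alpha>) z"
  shows "z = z'"
proof -
  define D where "D = {x. count z x \<noteq> count z' x}"
  have D_subset: "D \<subseteq> set_mset z \<union> set_mset z'"
    unfolding D_def by (auto simp: not_in_iff)
  have "\<alpha> * x \<in> D \<longleftrightarrow> x \<in> D" for x
  proof -
    have "count (z + image_mset ((*) \<alpha>) z') (\<alpha> * x) = count (z' + image_mset ((*) \<alpha>) z) (\<alpha> * x)"
      using swap by simp
    then have "count z (\<alpha> * x) + count z' x = count z' (\<alpha> * x) + count z x"
      using \<open>0 < \<alpha>\<close> by (simp add: count_image_mset_inj)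
    then show ?thesis
      unfolding D_def by auto
  qed
  moreover have "finite D" "D \<subseteq> {0<..}"
    using D_subset assms(3,4) by (auto intro: finite_subset)
  ultimately have "D = {}"
    using finite_mult_invariant_pos_set_empty \<open>\<alpha> \<noteq> 1\<close> by blast
  then show ?thesis
    unfolding D_def by (auto intro: multiset_eqI)
qed

lemma atoms_Nats: "atoms (\<nat> :: 'a::semiring_char_0 set) = {1}"
proof -
  have not_atom: "of_nat n \<notin> atoms (\<nat> :: 'a set)" if "n \<noteq> 1" for n
  proof (cases n)
    case (Suc m)
    with that have "m \<noteq> 0" by simp
    moreover have "(of_nat n :: 'a) = 1 + of_nat m"
      using Suc by simp
    moreover have "(1 :: 'a) \<in> \<nat>" "(of_nat m :: 'a) \<in> \<nat>"
      by simp_all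
    ultimately show ?thesis
      unfolding atoms_def by fastforce
  qed (simp add: atoms_def)
  have one_atom: "(1 :: 'a) \<in> atoms \<nat>"
  proof -
    have "b = 0 \<or> c = 0" if "b \<in> \<nat>" "c \<in> \<nat>" and sum: "(1 :: 'a) = b + c" for b c
    proof -
      obtain i j where ij: "b = of_nat i" "c = of_nat j"
        using \<open>b \<in> \<nat>\<close> \<open>c \<in> \<nat>\<close> by (auto elim!: Nats_cases)
      then have "of_nat (i + j) = (of_nat 1 :: 'a)"
        using sum by simp
      then have "i + j = 1"
        by (simp only: of_nat_eq_iff)
      then show ?thesis
        using ij by auto
    qed
    then show ?thesis
      unfolding atoms_def by auto
  qed
  have "x = 1" if x: "x \<in> atoms \<nat>" for x :: 'a
  proof -
    obtain n where "x = of_nat n"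
      using x atoms_subset by (blast elim: Nats_cases)
    with x not_atom[of n] show ?thesis
      by (cases "n = 1") auto
  qed
  with one_atom show ?thesis
    by blast
qed

lemma factorizations_Nats:
  "factorizations \<nat> (of_nat n) = {replicate_mset n (1 :: 'a::semiring_char_0)}"
proof -
  have "z = replicate_mset n 1" if "set_mset z \<subseteq> {1 :: 'a}" "sum_mset z = of_nat n" for z
  proof -
    have "z = replicate_mset (size z) 1"
      using that(1) by (induction z) auto
    moreover from this have "size z = n"
      using that(2) by (metis of_nat_eq_iff mult.right_neutral sum_mset_replicate_mset)
    ultimately show ?thesis
      by simp
  qed
  then show ?thesis
    unfolding factorizations_def atoms_Nats by (auto split: if_splits)
qed

lemma UFM_Nats: "UFM (\<nat> :: 'a::semiring_char_0 set)"
  unfolding UFM_def atomic_monoid_def by (auto elim!: Nats_cases simp: factorizations_Nats)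

lemma M_alpha_nonneg: "0 < \<alpha> \<Longrightarrow> M_alpha \<alpha> \<subseteq> {0..}"
  unfolding M_alpha_def by (auto intro!: sum_nonneg)

lemma M_alpha_add:
  assumes "x \<in> M_alpha \<alpha>" "y \<in> M_alpha \<alpha>"
  shows "x + y \<in> M_alpha \<alpha>"
proof -
  obtain S c where S: "finite S" and x: "x = (\<Sum>k\<in>S. of_nat (c k) * \<alpha> powi k)"
    using assms(1) unfolding M_alpha_def by blast
  obtain T d where T: "finite T" and y: "y = (\<Sum>k\<in>T. of_nat (d k) * \<alpha> powi k)"
    using assms(2) unfolding M_alpha_def by blast
  define e where "e k = (if k \<in> S then c k else 0) + (if k \<in> T then d k else 0)" for k
  have x': "x = (\<Sum>k\<in>S \<union> T. of_nat (if k \<in> S then c k else 0) * \<alpha> powi k)"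
    unfolding x by (rule sum.mono_neutral_cong_left) (use S T in auto)
  have y': "y = (\<Sum>k\<in>S \<union> T. of_nat (if k \<in> T then d k else 0) * \<alpha> powi k)"
    unfolding y by (rule sum.mono_neutral_cong_left) (use S T in auto)
  have "x + y = (\<Sum>k\<in>S \<union> T. of_nat (e k) * \<alpha> powi k)"
    unfolding x' y' e_def sum.distrib[symmetric] by (simp add: algebra_simps)
  then show ?thesis
    unfolding M_alpha_def using S T by blast
qed

lemma M_alpha_mult_powi:
  assumes "0 < \<alpha>" "x \<in> M_alpha \<alpha>"
  shows "\<alpha> powi j * x \<in> M_alpha \<alpha>"
proof -
  obtain S c where S: "finite S" and x: "x = (\<Sum>k\<in>S. of_nat (c k) * \<alpha> powi k)"
    using assms(2) unfolding M_alpha_def by blast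
  have "\<alpha> powi j * x = (\<Sum>k\<in>S. of_nat (c k) * \<alpha> powi (k + j))"
    unfolding x sum_distrib_left using assms(1) by (intro sum.cong) (auto simp: power_int_add)
  also have "\<dots> = (\<Sum>k\<in>(\<lambda>k. k + j) ` S. of_nat (c (k - j)) * \<alpha> powi k)"
    by (subst sum.reindex) (auto simp: inj_on_def)
  finally show ?thesis
    unfolding M_alpha_def using S
    by (intro CollectI exI[of _ "(\<lambda>k. k + j) ` S"] exI[of _ "\<lambda>k. c (k - j)"]) simp
qed

lemma M_alpha_1: "M_alpha 1 = \<nat>"
proof
  show "M_alpha 1 \<subseteq> \<nat>"
    unfolding M_alpha_def by (auto simp flip: of_nat_sum)
  have "of_nat n \<in> M_alpha 1" for n
    unfolding M_alpha_def by (intro CollectI exI[of _ "{0}"] exI[of _ "\<lambda>_. n"]) simp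
  then show "\<nat> \<subseteq> M_alpha 1"
    by (auto elim: Nats_cases)
qed

lemma atoms_M_alpha_mult:
  assumes "0 < \<alpha>" "a \<in> atoms (M_alpha \<alpha>)"
  shows "\<alpha> * a \<in> atoms (M_alpha \<alpha>)"
proof (rule atoms_mult_closed)
  show "\<alpha> * x \<in> M_alpha \<alpha>" "x / \<alpha> \<in> M_alpha \<alpha>" if "x \<in> M_alpha \<alpha>" for x
    using M_alpha_mult_powi[OF assms(1) that, of 1] M_alpha_mult_powi[OF assms(1) that, of "-1"]
    by (simp_all add: power_int_minus field_simps)
qed (use assms in auto)

lemma factorizations_M_alpha_mult:
  assumes "0 < \<alpha>" "z \<in> factorizations (M_alpha \<alpha>) a"
  shows "image_mset ((*) \<alpha>) z \<in> factorizations (M_alpha \<alpha>) (\<alpha> * a)"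
proof -
  have "sum_mset (image_mset ((*) \<alpha>) z) = \<alpha> * sum_mset z"
    by (induction z) (simp_all add: algebra_simps)
  then show ?thesis
    using assms atoms_M_alpha_mult[OF assms(1)] unfolding factorizations_def by auto
qed

lemma LFM_M_alpha_factorizations_unique:
  assumes "0 < \<alpha>" "\<alpha> \<noteq> 1" "LFM (M_alpha \<alpha>)" "a \<in> M_alpha \<alpha>"
    and z: "z \<in> factorizations (M_alpha \<alpha>) a" and z': "z' \<in> factorizations (M_alpha \<alpha>) a"
  shows "z = z'"
proof -
  let ?M = "M_alpha \<alpha>"
  have "z + image_mset ((*) \<alpha>) z' \<in> factorizations ?M (a + \<alpha> * a)"
    "z' + image_mset ((*) \<alpha>) z \<in> factorizations ?M (a + \<alpha> * a)"
    using z z' by (simp_all add: factorizations_add factorizations_M_alpha_mult \<open>0 < \<alpha>\<close>)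
  moreover have "a + \<alpha> * a \<in> ?M"
    using M_alpha_add[OF \<open>a \<in> ?M\<close> M_alpha_mult_powi[OF \<open>0 < \<alpha>\<close> \<open>a \<in> ?M\<close>, of 1]] by simp
  ultimately have "z + image_mset ((*) \<alpha>) z' = z' + image_mset ((*) \<alpha>) z"
    using \<open>LFM ?M\<close> unfolding LFM_def by simp
  moreover have "\<forall>x\<in>#z. 0 < x" "\<forall>x\<in>#z'. 0 < x"
    using z z' atoms_pos[OF M_alpha_nonneg[OF \<open>0 < \<alpha>\<close>]] unfolding factorizations_def by blast+
  ultimately show ?thesis
    using add_image_mset_mult_swap_imp_eq \<open>0 < \<alpha>\<close> \<open>\<alpha> \<noteq> 1\<close> by blast
qed

theorem proposition5p3:
  fixes \<alpha> :: real
  assumes "\<alpha> > 0"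
  shows "LFM (M_alpha \<alpha>) \<longleftrightarrow> UFM (M_alpha \<alpha>)"
proof
  assume "LFM (M_alpha \<alpha>)"
  show "UFM (M_alpha \<alpha>)"
  proof (cases "\<alpha> = 1")
    case True
    then show ?thesis
      by (simp add: M_alpha_1 UFM_Nats)
  next
    case False
    show ?thesis
      using \<open>LFM (M_alpha \<alpha>)\<close> LFM_M_alpha_factorizations_unique[OF assms False]
      unfolding UFM_iff_factorizations_unique LFM_def by blast
  qed
next
  show "UFM (M_alpha \<alpha>) \<Longrightarrow> LFM (M_alpha \<alpha>)"
    using UFM_imp_LFM M_alpha_nonneg[OF assms] by blast
qed

end
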